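(* Let $V$ be a $\mathcal{T}$-module such that the restriction of $V$ to $\mathcal{U}(\mathfrak{h})$, where $\mathfrak{h}=\mathbb{C}L_0\oplus\mathbb{C}G_0$, is free of rank $1$. Then there exist $\lambda\in\mathbb{C}^*$ and $\alpha\in\mathbb{C}$ such that $V$ or $\Pi(V)$ is isomorphic to $\mathcal{M}_1(\lambda,\alpha)$ or to $\mathcal{M}_{-1}(\lambda,\alpha)$.
   Context: The twisted $N=2$ superconformal algebra $\mathcal{T}$ is the Lie superalgebra over $\mathbb{C}$ with basis $\{L_m, I_r, G_p\mid m\in\mathbb{Z}, r\in\frac12+\mathbb{Z}, p\in\frac12\mathbb{Z}\}$, even part spanned by the $L_m,I_r$, odd part by the $G_p$, only nonzero brackets $[L_m,L_n]=(m-n)L_{m+n}$, $[L_m,I_r]=-rI_{m+r}$, $[L_m,G_p]=(\frac m2-p)G_{m+p}$, $[I_r,G_p]=G_{r+p}$, $[G_p,G_q]=(-1)^{2p}2L_{p+q}$ if $p+q\in\mathbb{Z}$, $[G_p,G_q]=(-1)^{2p+1}(p-q)I_{p+q}$ if $p+q\in\frac12+\mathbb{Z}$. Modules are $\mathbb{Z}_2$-graded; $\Pi$ is the parity-change functor. For $p\in\frac12\mathbb{Z}$, $\lambda^p$ means $(\lambda^{1/2})^{2p}$ for a fixed square root. For $\lambda\in\mathbb{C}^*,\alpha\in\mathbb{C},t=\pm1$, $\mathcal{M}_t(\lambda,\alpha)$ is the space $\mathbb{C}[\partial^2]\oplus\partial\mathbb{C}[\partial^2]$ ($\partial$ a formal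 variable; even part $\mathbb{C}[\partial^2]$, odd part $\partial\mathbb{C}[\partial^2]$) with action ($m\in\mathbb{Z}$, $r\in\frac12+\mathbb{Z}$, $p\in\frac12\mathbb{Z}$): $L_mf(\partial^2)=\lambda^m(\partial^2+m\alpha)f(\partial^2+m)$, $L_m\partial f(\partial^2)=\lambda^m(\partial^2+m(\alpha+\frac12))\partial f(\partial^2+m)$, $I_rf(\partial^2)=-2t^{2r}\lambda^{r}\alpha f(\partial^2+r)$, $I_r\partial f(\partial^2)=t^{2r}\lambda^{r}(1-2\alpha)\partial f(\partial^2+r)$, $G_pf(\partial^2)=t^{2p}\lambda^p\partial f(\partial^2+p)$, $G_p\partial f(\partial^2)=(-t)^{2p}\lambda^p(\partial^2+2p\alpha)f(\partial^2+p)$. *)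

theory Defs
  imports Complex_Main "HOL-Computational_Algebra.Polynomial" "HOL-Library.Product_Plus"
begin

(* For the half-integer indexed generators we use doubled indices:
   I a (a :: int, a odd) stands for I_{a/2};  G b (b :: int) stands for G_{b/2}. *)

definition is_T_module ::
  "(complex \<Rightarrow> 'v::ab_group_add \<Rightarrow> 'v) \<Rightarrow> 'v set \<Rightarrow> 'v set \<Rightarrow>
   (int \<Rightarrow> 'v \<Rightarrow> 'v) \<Rightarrow> (int \<Rightarrow> 'v \<Rightarrow> 'v) \<Rightarrow> (int \<Rightarrow> 'v \<Rightarrow> 'v) \<Rightarrow> bool" where
  "is_T_module scale V0 V1 L I G \<longleftrightarrow>
     vector_space scale \<and>
     module.subspace scale V0 \<and> module.subspace scale V1 \<and>
     V0 \<inter> V1 = {0} \<and> (\<forall>v. \<exists>v0\<in>V0. \<exists>v1\<in>V1. v = v0 + v1) \<and>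
     (\<forall>m. Vector_Spaces.linear scale scale (L m)) \<and>
     (\<forall>a. odd a \<longrightarrow> Vector_Spaces.linear scale scale (I a)) \<and>
     (\<forall>b. Vector_Spaces.linear scale scale (G b)) \<and>
     (\<forall>m. L m ` V0 \<subseteq> V0 \<and> L m ` V1 \<subseteq> V1) \<and>
     (\<forall>a. odd a \<longrightarrow> I a ` V0 \<subseteq> V0 \<and> I a ` V1 \<subseteq> V1) \<and>
     (\<forall>b. G b ` V0 \<subseteq> V1 \<and> G b ` V1 \<subseteq> V0) \<and>
     (\<forall>m n v. L m (L n v) - L n (L m v) = scale (of_int (m - n)) (L (m + n) v)) \<and>
     (\<forall>m a v. odd a \<longrightarrow>
        L m (I a v) - I a (L m v) = scale (- (of_int a / 2)) (I (2 * m + a) v)) \<and>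
     (\<forall>m b v. L m (G b v) - G b (L m v) = scale (of_int m / 2 - of_int b / 2) (G (2 * m + b) v)) \<and>
     (\<forall>a c v. odd a \<longrightarrow> odd c \<longrightarrow> I a (I c v) - I c (I a v) = 0) \<and>
     (\<forall>a b v. odd a \<longrightarrow> I a (G b v) - G b (I a v) = G (a + b) v) \<and>
     (\<forall>a b v. G a (G b v) + G b (G a v) =
        (if even (a + b)
         then scale ((-1) ^ nat \<bar>a\<bar> * 2) (L ((a + b) div 2) v)
         else scale ((-1) ^ nat \<bar>a + 1\<bar> * (of_int a / 2 - of_int b / 2)) (I (a + b) v)))"

definition op_poly :: "(complex \<Rightarrow> 'v::ab_group_add \<Rightarrow> 'v) \<Rightarrow> complex poly \<Rightarrow> ('v \<Rightarrow> 'v) \<Rightarrow> 'v \<Rightarrow> 'v" where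
  "op_poly scale p T v = (\<Sum>i\<le>degree p. scale (coeff p i) ((T ^^ i) v))"

(* U(h), h = C L_0 + C G_0, has PBW basis L_0^i G_0^e (i \<ge> 0, e \<in> {0,1}).
   V is free of rank 1 over U(h): some v such that u \<mapsto> u.v is a bijection U(h) \<rightarrow> V;
   elements of U(h) are written a(L_0) + b(L_0) G_0 with polynomials a, b. *)
definition Uh_free_rank1 ::
  "(complex \<Rightarrow> 'v::ab_group_add \<Rightarrow> 'v) \<Rightarrow> (int \<Rightarrow> 'v \<Rightarrow> 'v) \<Rightarrow> (int \<Rightarrow> 'v \<Rightarrow> 'v) \<Rightarrow> bool" where
  "Uh_free_rank1 scale L G \<longleftrightarrow>
     (\<exists>v. bij (\<lambda>(a, b). op_poly scale a (L 0) v + op_poly scale b (L 0) (G 0 v)))"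

(* The module M_t(lambda, alpha): element (f, g) represents f(\<partial>^2) + \<partial> g(\<partial>^2).
   lambda^p := (csqrt lambda)^(2p) for p in (1/2)Z. *)
type_synonym Mspace = "complex poly \<times> complex poly"

definition M_scale :: "complex \<Rightarrow> Mspace \<Rightarrow> Mspace" where
  "M_scale c x = (smult c (fst x), smult c (snd x))"

definition M_even :: "Mspace set" where "M_even = {(f, 0) | f. True}"
definition M_odd :: "Mspace set" where "M_odd = {(0, g) | g. True}"

definition shift :: "complex \<Rightarrow> complex poly \<Rightarrow> complex poly" where
  "shift c f = pcompose f [:c, 1:]"

definition M_L :: "complex \<Rightarrow> complex \<Rightarrow> int \<Rightarrow> Mspace \<Rightarrow> Mspace" where
  "M_L lam \<alpha> m x =
     (smult (csqrt lam powi (2 * m)) ([:of_int m * \<alpha>, 1:] * shift (of_int m) (fst x)),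
      smult (csqrt lam powi (2 * m)) ([:of_int m * (\<alpha> + 1/2), 1:] * shift (of_int m) (snd x)))"

definition M_I :: "complex \<Rightarrow> complex \<Rightarrow> complex \<Rightarrow> int \<Rightarrow> Mspace \<Rightarrow> Mspace" where
  "M_I t lam \<alpha> a x =
     (smult (- 2 * t powi a * csqrt lam powi a * \<alpha>) (shift (of_int a / 2) (fst x)),
      smult (t powi a * csqrt lam powi a * (1 - 2 * \<alpha>)) (shift (of_int a / 2) (snd x)))"

definition M_G :: "complex \<Rightarrow> complex \<Rightarrow> complex \<Rightarrow> int \<Rightarrow> Mspace \<Rightarrow> Mspace" where
  "M_G t lam \<alpha> b x =
     (smult ((- t) powi b * csqrt lam powi b) ([:of_int b * \<alpha>, 1:] * shift (of_int b / 2) (snd x)),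
      smult (t powi b * csqrt lam powi b) (shift (of_int b / 2) (fst x)))"

definition iso_to_M ::
  "(complex \<Rightarrow> 'v::ab_group_add \<Rightarrow> 'v) \<Rightarrow> 'v set \<Rightarrow> 'v set \<Rightarrow>
   (int \<Rightarrow> 'v \<Rightarrow> 'v) \<Rightarrow> (int \<Rightarrow> 'v \<Rightarrow> 'v) \<Rightarrow> (int \<Rightarrow> 'v \<Rightarrow> 'v) \<Rightarrow>
   complex \<Rightarrow> complex \<Rightarrow> complex \<Rightarrow> bool" where
  "iso_to_M scale V0 V1 L I G t lam \<alpha> \<longleftrightarrow>
     (\<exists>\<phi> :: 'v \<Rightarrow> Mspace.
        Vector_Spaces.linear scale M_scale \<phi> \<and> bij \<phi> \<and>
        \<phi> ` V0 = M_even \<and> \<phi> ` V1 = M_odd \<and>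
        (\<forall>m v. \<phi> (L m v) = M_L lam \<alpha> m (\<phi> v)) \<and>
        (\<forall>a v. odd a \<longrightarrow> \<phi> (I a v) = M_I t lam \<alpha> a (\<phi> v)) \<and>
        (\<forall>b v. \<phi> (G b v) = M_G t lam \<alpha> b (\<phi> v)))"

end

theory Submission
  imports Defs
begin

text \<open>A free generator \<open>v\<close> of \<open>V\<close> over \<open>U(h)\<close> gives coordinates: every vector is uniquely
  \<open>f(L_0) v + g(L_0) G_0 v\<close>. The parity flip commutes with \<open>L_0\<close> and anticommutes with \<open>G_0\<close>,
  which turns the coordinates \<open>(h, k)\<close> of the flipped \<open>v\<close> into a solution of \<open>h\<^sup>2 - x k\<^sup>2 = 1\<close>;
  hence \<open>v\<close> is homogeneous, and even after a parity change. Then \<open>G_b\<close> acts through two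
  polynomials, \<open>G_b v = A_b(L_0) G_0 v\<close> and \<open>G_b G_0 v = B_b(L_0) v\<close>, and since every
  anticommutator \<open>[G_a, G_b]\<close> is a multiple of \<open>[G_0, G_(a+b)]\<close>, these satisfy a system of
  functional equations. The equations with \<open>a + b = 0\<close> make all \<open>A_b\<close>, \<open>B_b\<close> at most linear,
  those with \<open>a = b\<close> make \<open>A_b\<close> constant, and with \<open>(a, b) = (2, -1)\<close> they fix
  \<open>A_(\<plusminus>1)\<close>, \<open>B_(\<plusminus>1)\<close> up to two parameters \<open>u\<close>, \<open>\<alpha>\<close>. The remaining equations
  determine \<open>A_(a+b)\<close>, \<open>B_(a+b)\<close> from \<open>A_a\<close>, \<open>B_a\<close>, \<open>A_b\<close>, \<open>B_b\<close>, so
  \<open>A_b = u\<^sup>b\<close> and \<open>B_b = (-u)\<^sup>b (x + b \<alpha>)\<close> for all \<open>b\<close>. As \<open>L_m\<close> and \<open>I_a\<close> are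
  anticommutators of the \<open>G\<close>'s, this fixes the whole action: it is that of \<open>M_t(\<lambda>, \<alpha>)\<close> with
  \<open>\<lambda> = u\<^sup>2\<close> and \<open>t = u / \<surd>\<lambda>\<close>.\<close>

section \<open>Polynomials in an operator\<close>

locale complex_vector_space = vector_space scale
  for scale :: "complex \<Rightarrow> 'v::ab_group_add \<Rightarrow> 'v"
begin

sublocale endo: vector_space_pair scale scale ..

lemma scale_2: "scale 2 x = x + x"
  using scale_left_distrib[of 1 1 x] by simp

lemma op_poly_eq_sum_atMost:
  assumes "degree p \<le> n"
  shows "op_poly scale p T v = (\<Sum>i\<le>n. scale (coeff p i) ((T ^^ i) v))"
proof -
  have "(\<Sum>i\<le>n. scale (coeff p i) ((T ^^ i) v)) =
        (\<Sum>i\<le>degree p. scale (coeff p i) ((T ^^ i) v)) +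
        (\<Sum>i\<in>{degree p<..n}. scale (coeff p i) ((T ^^ i) v))"
    using assms by (subst sum.union_disjoint[symmetric]) (auto intro!: sum.cong)
  also have "(\<Sum>i\<in>{degree p<..n}. scale (coeff p i) ((T ^^ i) v)) = 0"
    by (intro sum.neutral) (auto simp: coeff_eq_0)
  finally show ?thesis by (simp add: op_poly_def)
qed

lemma op_poly_0 [simp]: "op_poly scale 0 T v = 0"
  by (simp add: op_poly_def)

lemma op_poly_add: "op_poly scale (p + q) T v = op_poly scale p T v + op_poly scale q T v"
proof -
  let ?n = "max (degree p) (degree q)"
  have "degree (p + q) \<le> ?n" by (rule degree_add_le) auto
  then show ?thesis
    by (simp add: op_poly_eq_sum_atMost[of _ ?n] scale_left_distrib sum.distrib)
qed

lemma op_poly_smult: "op_poly scale (smult c p) T v = scale c (op_poly scale p T v)"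
  by (simp add: op_poly_eq_sum_atMost[of _ "degree p"] scale_sum_right)

lemma op_poly_diff: "op_poly scale (p - q) T v = op_poly scale p T v - op_poly scale q T v"
  using op_poly_add[of "p - q" q T v] by (simp add: algebra_simps)

context
  fixes T :: "'v \<Rightarrow> 'v"
  assumes T: "Vector_Spaces.linear scale scale T"
begin

lemma op_poly_pCons: "op_poly scale (pCons a p) T v = scale a v + T (op_poly scale p T v)"
proof -
  have "op_poly scale (pCons a p) T v =
        (\<Sum>i\<le>Suc (degree p). scale (coeff (pCons a p) i) ((T ^^ i) v))"
    by (rule op_poly_eq_sum_atMost) simp
  also have "\<dots> = scale a v + (\<Sum>i\<le>degree p. scale (coeff p i) ((T ^^ Suc i) v))"
    by (subst sum.atMost_Suc_shift) simp
  also have "(\<Sum>i\<le>degree p. scale (coeff p i) ((T ^^ Suc i) v)) = T (op_poly scale p T v)"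
    by (simp add: op_poly_def endo.linear_sum[OF T] endo.linear_scale[OF T])
  finally show ?thesis .
qed

lemma op_poly_const: "op_poly scale [:a:] T v = scale a v"
  using op_poly_pCons[of a 0] by (simp add: endo.linear_0[OF T])

lemma op_poly_1: "op_poly scale 1 T v = v"
  using op_poly_const[of 1] by (simp add: one_pCons)

lemma op_poly_mult: "op_poly scale (p * q) T v = op_poly scale p T (op_poly scale q T v)"
  by (induction p) (simp_all add: op_poly_add op_poly_smult op_poly_pCons)

lemma linear_op_poly: "Vector_Spaces.linear scale scale (op_poly scale p T)"
proof (induction p)
  case 0
  have "op_poly scale 0 T = (\<lambda>v. 0)" by (simp add: fun_eq_iff)
  then show ?case by (simp add: endo.linear_zero)
next
  case (pCons a p)
  have "Vector_Spaces.linear scale scale (\<lambda>v. scale a v + T (op_poly scale p T v))"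
    using endo.linear_compose_add[OF linear_scale_self Vector_Spaces.linear_compose[OF pCons.IH T]]
    by (simp add: o_def)
  then show ?case by (simp add: op_poly_pCons)
qed

lemma op_poly_commute:
  assumes X: "Vector_Spaces.linear scale scale X"
    and comm: "\<And>u. X (T u) = T (X u) + scale d (X u)"
  shows "X (op_poly scale p T u) = op_poly scale (pcompose p [:d, 1:]) T (X u)"
proof (induction p)
  case 0
  then show ?case by (simp add: endo.linear_0[OF X])
next
  case (pCons a p)
  have "pcompose (pCons a p) [:d, 1:] =
        [:a:] + (smult d (pcompose p [:d, 1:]) + pCons 0 (pcompose p [:d, 1:]))"
    by (simp add: pcompose_pCons)
  then show ?case
    using pCons by (simp add: op_poly_add op_poly_smult op_poly_pCons op_poly_const
        endo.linear_add[OF X] endo.linear_scale[OF X] comm endo.linear_0[OF T] ac_simps)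
qed

lemma op_poly_in_subspace:
  assumes "subspace S" "\<And>u. u \<in> S \<Longrightarrow> T u \<in> S" "u \<in> S"
  shows "op_poly scale p T u \<in> S"
  by (induction p) (use assms in \<open>simp_all add: op_poly_pCons subspace_0 subspace_add subspace_scale\<close>)

end

end


section \<open>The functional equations for the action of \<open>G\<close>\<close>

lemma poly_shift [simp]: "poly (shift c p) y = poly p (y + c)"
  by (simp add: shift_def poly_pcompose add.commute)

lemma shift_0 [simp]: "shift c 0 = 0"
  by (simp add: shift_def)

lemma shift_1 [simp]: "shift c 1 = 1"
  by (simp add: shift_def pcompose_1)

lemma shift_const [simp]: "shift d [:a:] = [:a:]"
  by (simp add: shift_def)

lemma shift_by_0 [simp]: "shift 0 p = p"
  by (simp add: shift_def)

lemma shift_linear [simp]: "shift d [:a, b:] = [:a + b * d, b:]"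
  by (simp add: shift_def pcompose_pCons algebra_simps)

lemma degree_shift [simp]: "degree (shift d p) = degree p"
  by (simp add: shift_def degree_pcompose)

lemma degree_le_1_eq: "degree (p :: 'a::zero poly) \<le> 1 \<Longrightarrow> p = [:coeff p 0, coeff p 1:]"
  by (rule poly_eqI) (auto simp: coeff_pCons coeff_eq_0 split: nat.splits)

lemma smult_2_eq_add: "smult 2 p = p + (p :: 'a::comm_semiring_1 poly)"
  using smult_add_left[of 1 1 p] by simp

lemma degree_factors_of_linear:
  fixes p q :: "'a::idom poly"
  assumes "p * q = [:c, e:]" "e \<noteq> 0"
  shows "degree p \<le> 1" "degree q \<le> 1"
proof -
  have "p \<noteq> 0" "q \<noteq> 0" "degree (p * q) = 1" using assms by auto
  then show "degree p \<le> 1" "degree q \<le> 1" by (simp_all add: degree_mult_eq)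
qed

lemma poly_eq_linear_if_shift_add:
  fixes p :: "'a::field_char_0 poly"
  assumes "b \<noteq> 0" and step: "\<And>z. poly p (z + b) = poly p z + e * b"
  shows "p = [:poly p 0, e:]"
proof -
  define q where "q = p - [:poly p 0, e:]"
  have "poly p (of_nat k * b) = poly p 0 + of_nat k * e * b" for k
  proof (induction k)
    case (Suc k)
    have "poly p (of_nat (Suc k) * b) = poly p (of_nat k * b + b)"
      by (simp add: algebra_simps)
    then show ?case using Suc step[of "of_nat k * b"] by (simp add: algebra_simps)
  qed simp
  then have roots: "range (\<lambda>k. of_nat k * b) \<subseteq> {y. poly q y = 0}"
    by (auto simp: q_def algebra_simps)
  have "infinite (range (\<lambda>k. of_nat k * b))"
    using \<open>b \<noteq> 0\<close> by (intro range_inj_infinite) (auto simp: inj_def)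
  then have "q = 0"
    using roots poly_roots_finite finite_subset by blast
  then show ?thesis by (simp add: q_def)
qed

lemma pell_poly_trivial:
  fixes h k :: "'a::idom poly"
  assumes "h * h - [:0, 1:] * (k * k) = 1"
  shows "k = 0 \<and> (h = 1 \<or> h = -1)"
proof -
  have "k = 0"
  proof (rule ccontr)
    define X where "X = [:0, 1:] * (k * k)"
    assume "k \<noteq> 0"
    then have "degree X = 1 + 2 * degree k"
      by (simp add: X_def degree_mult_eq)
    moreover have "degree (h * h) = 2 * degree h"
      by (cases "h = 0") (simp_all add: degree_mult_eq)
    ultimately have "degree (h * h) \<noteq> degree X" by presburger
    then have "degree (h * h - X) = max (degree (h * h)) (degree X)"
      using degree_add_eq_right[of "h * h" "- X"] degree_add_eq_left[of "- X" "h * h"]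
      by (cases "degree (h * h) < degree X") auto
    with \<open>degree X = 1 + 2 * degree k\<close> assms show False
      by (simp add: X_def)
  qed
  with assms have hh: "h * h = 1" by simp
  then have "degree h = 0"
    using degree_mult_eq[of h h] by (cases "h = 0") auto
  then obtain c where "h = [:c:]" by (metis degree_eq_zeroE)
  with hh have "c * c = 1" by (simp add: one_pCons)
  then have "c = 1 \<or> c = -1"
    by (metis minus_one_mult_self mult_1 square_eq_iff)
  with \<open>k = 0\<close> \<open>h = [:c:]\<close> show ?thesis by (auto simp: one_pCons)
qed


text \<open>The ratio of the anticommutator \<open>[G_a, G_b]\<close> to \<open>[G_0, G_(a+b)]\<close>
  (indices doubled, as in the definition of \<open>is_T_module\<close>).\<close>

definition anticomm_factor :: "int \<Rightarrow> int \<Rightarrow> complex" where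
  "anticomm_factor a b =
     (if even (a + b) then (-1) ^ nat \<bar>a\<bar>
      else (-1) ^ nat \<bar>a + 1\<bar> * of_int (a - b) / of_int (a + b))"

lemma minus_one_power_nat_abs: "(-1 :: 'a::ring_1) ^ nat \<bar>a\<bar> = (if even a then 1 else -1)"
  by (simp add: minus_one_power_iff even_nat_iff)

lemma anticomm_factor_even: "even (a + b) \<Longrightarrow> anticomm_factor a b = (if even a then 1 else -1)"
  by (simp add: anticomm_factor_def minus_one_power_nat_abs)

lemma anticomm_factor_odd:
  "odd (a + b) \<Longrightarrow> anticomm_factor a b = (if even a then -1 else 1) * of_int (a - b) / of_int (a + b)"
  by (simp add: anticomm_factor_def minus_one_power_nat_abs)

lemma anticomm_factor_nonzero: "anticomm_factor a b \<noteq> 0"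
proof (cases "even (a + b)")
  case False
  then have "a + b \<noteq> 0" "a - b \<noteq> 0" by (auto dest: arg_cong[of _ _ even])
  then have "(of_int a + of_int b :: complex) \<noteq> 0" "(of_int a - of_int b :: complex) \<noteq> 0"
    by (metis of_int_add of_int_eq_0_iff, metis of_int_diff of_int_eq_0_iff)
  with False show ?thesis by (simp add: anticomm_factor_odd)
qed (simp add: anticomm_factor_even)

lemma anticomm_factor_diag: "anticomm_factor b b = (-1) ^ nat \<bar>b\<bar>"
  by (simp add: anticomm_factor_def)

text \<open>\<open>A b\<close> and \<open>B b\<close> stand for the polynomials with \<open>G_b v = A_b(L_0) G_0 v\<close> and
  \<open>G_b G_0 v = B_b(L_0) v\<close> for an even free generator \<open>v\<close>; the two equations are the relation
  \<open>[G_a, G_b] = anticomm_factor a b [G_0, G_(a+b)]\<close> applied to \<open>v\<close> and to \<open>G_0 v\<close>.\<close>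

locale anticomm_system =
  fixes A B :: "int \<Rightarrow> complex poly"
  assumes anticomm_v: "\<And>a b. B a * shift (of_int a / 2) (A b) + B b * shift (of_int b / 2) (A a) =
      smult (anticomm_factor a b) ([:0, 1:] * A (a + b) + B (a + b))"
    and anticomm_G0v: "\<And>a b. A a * shift (of_int a / 2) (B b) + A b * shift (of_int b / 2) (B a) =
      smult (anticomm_factor a b) (B (a + b) + [:of_int (a + b) / 2, 1:] * A (a + b))"
    and A_0: "A 0 = 1"
    and B_0: "B 0 = [:0, 1:]"

text \<open>The polynomials \<open>A_b\<close>, \<open>B_b\<close> of \<open>M_t(\<lambda>, \<alpha>)\<close>, where \<open>u = t \<surd>\<lambda>\<close>.\<close>

definition model_A :: "complex \<Rightarrow> int \<Rightarrow> complex poly" where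
  "model_A u b = [:u powi b:]"

definition model_B :: "complex \<Rightarrow> complex \<Rightarrow> int \<Rightarrow> complex poly" where
  "model_B u \<alpha> b = smult ((-u) powi b) [:of_int b * \<alpha>, 1:]"

lemma anticomm_system_model:
  assumes "u \<noteq> 0"
  shows "anticomm_system (model_A u) (model_B u \<alpha>)"
proof
  fix a b
  have pa: "u powi (a + b) = u powi a * u powi b"
    using assms by (simp add: power_int_add)
  have nz: "odd (a + b) \<Longrightarrow>
      (of_int a + of_int b :: complex) \<noteq> 0 \<and> (of_int a * 2 + of_int b * 2 :: complex) \<noteq> 0"
    by (metis distrib_right even_zero mult_eq_0_iff of_int_add of_int_eq_0_iff zero_neq_numeral)
  show "model_B u \<alpha> a * shift (of_int a / 2) (model_A u b) +
        model_B u \<alpha> b * shift (of_int b / 2) (model_A u a) =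
        smult (anticomm_factor a b) ([:0, 1:] * model_A u (a + b) + model_B u \<alpha> (a + b))"
    using nz
    by (cases "even (a + b)"; cases "even a")
       (auto simp: model_A_def model_B_def power_int_minus_left pa anticomm_factor_even
         anticomm_factor_odd even_add field_simps)
  show "model_A u a * shift (of_int a / 2) (model_B u \<alpha> b) +
        model_A u b * shift (of_int b / 2) (model_B u \<alpha> a) =
        smult (anticomm_factor a b) (model_B u \<alpha> (a + b) + [:of_int (a + b) / 2, 1:] * model_A u (a + b))"
    using nz
    by (cases "even (a + b)"; cases "even a")
       (auto simp: model_A_def model_B_def power_int_minus_left pa anticomm_factor_even
         anticomm_factor_odd even_add field_simps)
qed (simp_all add: model_A_def model_B_def one_pCons)


context anticomm_system
begin

lemma anticomm_opposite:
  "poly (B b) y * poly (A (-b)) (y + of_int b / 2) + poly (B (-b)) y * poly (A b) (y - of_int b / 2) =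
     (-1) ^ nat \<bar>b\<bar> * (2 * y)"
  "poly (A b) y * poly (B (-b)) (y + of_int b / 2) + poly (A (-b)) y * poly (B b) (y - of_int b / 2) =
     (-1) ^ nat \<bar>b\<bar> * (2 * y)"
  using arg_cong[OF anticomm_v[of b "-b"], of "\<lambda>p. poly p y"]
    arg_cong[OF anticomm_G0v[of b "-b"], of "\<lambda>p. poly p y"]
  by (simp_all add: anticomm_factor_def A_0 B_0 algebra_simps)

text \<open>The relations with \<open>a + b = 0\<close> say that \<open>z \<mapsto> B_b(z) A_(-b)(z + b/2)\<close> grows by
  \<open>\<plusminus>b\<close> under \<open>z \<mapsto> z + b\<close>, so this product is linear.\<close>

lemma product_opposite_linear:
  assumes "b \<noteq> 0"
  obtains c where "B b * shift (of_int b / 2) (A (-b)) = [:c, (-1) ^ nat \<bar>b\<bar>:]"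
    and "B (-b) * shift (- of_int b / 2) (A b) = [:-c, (-1) ^ nat \<bar>b\<bar>:]"
proof -
  define e :: complex where "e = (-1) ^ nat \<bar>b\<bar>"
  define h where "h = B b * shift (of_int b / 2) (A (-b))"
  have "poly h (z + of_int b) = poly h z + e * of_int b" for z
  proof -
    define Q where "Q = poly (B (-b)) (z + of_int b) * poly (A b) (z + of_int b / 2)"
    have "poly h (z + of_int b) = 2 * e * (z + of_int b) - Q"
      using anticomm_opposite(1)[of b "z + of_int b"] by (simp add: h_def e_def Q_def algebra_simps)
    moreover have "poly h z = 2 * e * (z + of_int b / 2) - Q"
      using anticomm_opposite(2)[of b "z + of_int b / 2"] by (simp add: h_def e_def Q_def algebra_simps)
    ultimately show ?thesis by simp (simp add: algebra_simps)
  qed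
  then have h: "h = [:poly h 0, e:]"
    using assms by (intro poly_eq_linear_if_shift_add[of "of_int b"]) simp_all
  have "h + B (-b) * shift (- of_int b / 2) (A b) = [:0, 2 * e:]"
    using anticomm_v[of b "-b"] by (simp add: h_def anticomm_factor_def A_0 B_0 e_def)
  then have "B (-b) * shift (- of_int b / 2) (A b) = [:0, 2 * e:] - h"
    by (simp add: eq_diff_eq add.commute)
  also have "\<dots> = [:- poly h 0, e:]"
    by (subst h) simp
  finally show ?thesis
    using h that unfolding h_def e_def by blast
qed

lemma degree_le_1:
  assumes "b \<noteq> 0"
  shows "degree (A b) \<le> 1" "degree (B b) \<le> 1"
proof -
  obtain c where Bb: "B b * shift (of_int b / 2) (A (-b)) = [:c, (-1) ^ nat \<bar>b\<bar>:]"
    and Ab: "B (-b) * shift (- of_int b / 2) (A b) = [:-c, (-1) ^ nat \<bar>b\<bar>:]"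
    using product_opposite_linear[OF assms] .
  have "(-1 :: complex) ^ nat \<bar>b\<bar> \<noteq> 0" by simp
  from degree_factors_of_linear(2)[OF Ab this] degree_factors_of_linear(1)[OF Bb this]
  show "degree (A b) \<le> 1" "degree (B b) \<le> 1" by simp_all
qed

lemma A_double:
  "smult (of_int b * anticomm_factor b b) (A (2 * b)) =
     smult 2 (A b * shift (of_int b / 2) (B b) - B b * shift (of_int b / 2) (A b))"
proof -
  have double: "b + b = 2 * b" by simp
  have "[:of_int (2 * b) / 2, 1:] = [:0, 1:] + [:of_int b :: complex:]" by simp
  with anticomm_v[of b b, unfolded double] anticomm_G0v[of b b, unfolded double] show ?thesis
    by (simp add: smult_2_eq_add algebra_simps smult_add_right)
qed

lemma B_double:
  "smult (anticomm_factor b b) (B (2 * b)) =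
     smult 2 (B b * shift (of_int b / 2) (A b)) - smult (anticomm_factor b b) ([:0, 1:] * A (2 * b))"
proof -
  have double: "b + b = 2 * b" by simp
  from anticomm_v[of b b, unfolded double] show ?thesis
    by (simp add: smult_2_eq_add smult_add_right)
qed

lemma A_double_eq:
  assumes "b \<noteq> 0" "A b = [:a0, a1:]" "B b = [:b0, b1:]"
  shows "A (2 * b) = [:(-1) ^ nat \<bar>b\<bar> * (a0 * b1 - b0 * a1):]"
proof -
  define \<sigma> :: complex where "\<sigma> = (-1) ^ nat \<bar>b\<bar>"
  from A_double[of b, unfolded anticomm_factor_diag, folded \<sigma>_def]
  have "smult (of_int b) (smult \<sigma> (A (2 * b))) = smult (of_int b) [:a0 * b1 - b0 * a1:]"
    by (simp add: assms(2,3) algebra_simps)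
  then have "smult \<sigma> (A (2 * b)) = [:a0 * b1 - b0 * a1:]"
    by (rule smult_cancel[rotated]) (use assms in simp)
  from arg_cong[OF this, of "smult \<sigma>"] have "smult (\<sigma> * \<sigma>) (A (2 * b)) = [:\<sigma> * (a0 * b1 - b0 * a1):]"
    by simp
  moreover have "\<sigma> * \<sigma> = 1"
    by (simp add: \<sigma>_def minus_one_power_nat_abs)
  ultimately show ?thesis
    by (simp add: \<sigma>_def)
qed

lemma B_double_eq:
  assumes "b \<noteq> 0" "A b = [:a0, a1:]" "B b = [:b0, b1:]"
  shows "smult ((-1) ^ nat \<bar>b\<bar>) (B (2 * b)) =
    [:2 * b0 * (a0 + a1 * (of_int b / 2)),
      2 * (b0 * a1 + b1 * (a0 + a1 * (of_int b / 2))) - (a0 * b1 - b0 * a1),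
      2 * b1 * a1:]"
proof -
  have "(-1 :: complex) ^ nat \<bar>b\<bar> * (-1) ^ nat \<bar>b\<bar> = 1"
    by (simp add: minus_one_power_nat_abs)
  with B_double[of b, unfolded A_double_eq[OF assms] anticomm_factor_diag] show ?thesis
    by (simp add: assms(2,3) algebra_simps)
qed

lemma opposite_coeffs:
  assumes "b \<noteq> 0" "B b = [:b0, b1:]" "A (-b) = [:e0, e1:]"
  shows "b1 * e1 = 0" "b0 * e1 + b1 * (e0 + e1 * (of_int b / 2)) = (-1) ^ nat \<bar>b\<bar>"
proof -
  obtain c where "B b * shift (of_int b / 2) (A (-b)) = [:c, (-1) ^ nat \<bar>b\<bar>:]"
    using product_opposite_linear[OF assms(1)] .
  then show "b1 * e1 = 0" "b0 * e1 + b1 * (e0 + e1 * (of_int b / 2)) = (-1) ^ nat \<bar>b\<bar>"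
    by (simp_all add: assms(2,3) algebra_simps)
qed

text \<open>Every \<open>A_b\<close> is constant: a linear \<open>A_b\<close> would force, through the relations with
  \<open>a + b \<in> {0, 2b}\<close>, the identity \<open>-3 = 1\<close> among the coefficients.\<close>

lemma degree_A_eq_0: "degree (A b) = 0"
proof (rule ccontr)
  assume nonconst: "degree (A b) \<noteq> 0"
  then have "b \<noteq> 0" using A_0 by auto
  define \<sigma> :: complex where "\<sigma> = (-1) ^ nat \<bar>b\<bar>"
  have \<sigma>: "\<sigma> * \<sigma> = 1" "(-1) ^ nat \<bar>-b\<bar> = \<sigma>" "(-1 :: complex) ^ nat \<bar>2 * b\<bar> = 1"
    by (simp_all add: \<sigma>_def minus_one_power_nat_abs)
  obtain a0 a1 b0 b1 e0 e1 d0 d1 where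
    A: "A b = [:a0, a1:]" and B: "B b = [:b0, b1:]" and
    Am: "A (-b) = [:e0, e1:]" and Bm: "B (-b) = [:d0, d1:]"
  proof -
    have "degree (A b) \<le> 1" "degree (B b) \<le> 1" "degree (A (-b)) \<le> 1" "degree (B (-b)) \<le> 1"
      using degree_le_1 \<open>b \<noteq> 0\<close> by simp_all
    then show thesis
      using that degree_le_1_eq by blast
  qed
  have "a1 \<noteq> 0" using nonconst A by auto
  have "d1 * a1 = 0" "d0 * a1 + d1 * (a0 + a1 * (- of_int b / 2)) = \<sigma>"
    using opposite_coeffs[of "-b"] \<open>b \<noteq> 0\<close> Bm A \<sigma>(2) by simp_all
  then have d: "d1 = 0" "d0 * a1 = \<sigma>" using \<open>a1 \<noteq> 0\<close> by simp_all
  define g' where "g' = \<sigma> * (e0 * d1 - d0 * e1)"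
  have "A (-(2 * b)) = [:g':]"
    using A_double_eq[of "-b"] \<open>b \<noteq> 0\<close> Am Bm \<sigma>(2) by (simp add: g'_def)
  then obtain c2 where "B (2 * b) * [:g':] = [:c2, 1:]"
    using product_opposite_linear[of "2 * b"] \<open>b \<noteq> 0\<close> \<sigma>(3) by auto
  then have "smult \<sigma> (B (2 * b)) * [:g':] = [:\<sigma> * c2, \<sigma>:]"
    by (metis mult_smult_left smult_pCons smult_0_right mult.right_neutral)
  then have g: "2 * b1 * a1 * g' = 0"
    "(2 * (b0 * a1 + b1 * (a0 + a1 * (of_int b / 2))) - (a0 * b1 - b0 * a1)) * g' = \<sigma>"
    unfolding B_double_eq[OF \<open>b \<noteq> 0\<close> A B, folded \<sigma>_def] by (simp_all add: algebra_simps)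
  have "g' \<noteq> 0" using g(2) \<sigma>(1) by auto
  with g(1) \<open>a1 \<noteq> 0\<close> have "b1 = 0" by simp
  with opposite_coeffs[OF \<open>b \<noteq> 0\<close> B Am] have "b0 * e1 = \<sigma>" by (simp add: \<sigma>_def)
  have "\<sigma> = 3 * (b0 * a1) * g'"
    using g(2) \<open>b1 = 0\<close> by (simp add: algebra_simps)
  also have "\<dots> = - 3 * \<sigma> * ((b0 * e1) * (d0 * a1))"
    by (simp add: g'_def d(1) algebra_simps)
  also have "\<dots> = -3 * \<sigma>"
    by (simp add: \<open>b0 * e1 = \<sigma>\<close> d(2) \<sigma>(1) mult.assoc)
  finally have "\<sigma> = -3 * \<sigma>" .
  with \<sigma>(1) show False by simp
qed

lemma eq_model_at_pm1:
  obtains u \<alpha> where "u \<noteq> 0"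
    "A 1 = model_A u 1" "B 1 = model_B u \<alpha> 1" "A (-1) = model_A u (-1)" "B (-1) = model_B u \<alpha> (-1)"
proof -
  obtain a e where A1: "A 1 = [:a:]" and Am1: "A (-1) = [:e:]"
    using degree_eq_zeroE[OF degree_A_eq_0] by metis
  obtain b0 b1 d0 d1 where B1: "B 1 = [:b0, b1:]" and Bm1: "B (-1) = [:d0, d1:]"
    using degree_le_1_eq[OF degree_le_1(2)[of 1]] degree_le_1_eq[OF degree_le_1(2)[of "-1"]] by auto
  obtain c where "B 1 * shift (1 / 2) (A (-1)) = [:c, -1:]"
    and "B (-1) * shift (- 1 / 2) (A 1) = [:-c, -1:]"
    using product_opposite_linear[of 1] by auto
  then have h: "b1 * e = -1" "b0 * e = c" "d1 * a = -1" "d0 * a = -c"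
    by (simp_all add: A1 Am1 B1 Bm1 mult.commute)
  have A1': "A 1 = [:a, 0:]" using A1 by simp
  have A2: "A 2 = [:- (a * b1):]"
    using A_double_eq[OF _ A1' B1] by simp
  have "smult (-1) (B 2) = [:2 * a * b0, a * b1:]"
    using B_double_eq[OF _ A1' B1] by (simp add: algebra_simps)
  from arg_cong[OF this, of uminus] have B2: "B 2 = [:- 2 * a * b0, - a * b1:]"
    by simp
  have "anticomm_factor 2 (-1) = -3"
    by (simp add: anticomm_factor_def)
  with anticomm_v[of 2 "-1"]
  have "- 3 * a - 3 * b1 = - a * (b1 * e) - b1 * (d1 * a)"
    by (simp add: A1 Am1 B1 Bm1 A2 B2 algebra_simps)
  also have "\<dots> = a + b1"
    using h by simp
  finally have "4 * (b1 + a) = 0" by (simp add: algebra_simps)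
  then have b1: "b1 = - a" by (metis eq_neg_iff_add_eq_0 mult_eq_0_iff zero_neq_numeral)
  have "a \<noteq> 0" using h(3) by auto
  have e: "e = 1 / a" using h(1) \<open>a \<noteq> 0\<close> by (simp add: b1 field_simps)
  show thesis
  proof (rule that[of a "- b0 / a"])
    show "A 1 = model_A a 1" "B 1 = model_B a (- b0 / a) 1"
      using \<open>a \<noteq> 0\<close> by (simp_all add: model_A_def model_B_def A1 B1 b1)
    show "A (-1) = model_A a (-1)" "B (-1) = model_B a (- b0 / a) (-1)"
      using h \<open>a \<noteq> 0\<close> by (simp_all add: model_A_def model_B_def Am1 Bm1 e power_int_minus field_simps)
  qed fact
qed

lemma agree_at_add:
  assumes "anticomm_system A' B'" and "s + n \<noteq> 0"
    and "A s = A' s" "B s = B' s" "A n = A' n" "B n = B' n"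
  shows "A (s + n) = A' (s + n) \<and> B (s + n) = B' (s + n)"
proof -
  interpret other: anticomm_system A' B' by fact
  have "smult (anticomm_factor s n) ([:0, 1:] * A (s + n) + B (s + n)) =
        smult (anticomm_factor s n) ([:0, 1:] * A' (s + n) + B' (s + n))"
    using anticomm_v[of s n] other.anticomm_v[of s n] assms(3-6) by simp
  then have v: "[:0, 1:] * A (s + n) + B (s + n) = [:0, 1:] * A' (s + n) + B' (s + n)"
    using anticomm_factor_nonzero by (rule smult_cancel[rotated])
  have "smult (anticomm_factor s n) (B (s + n) + [:of_int (s + n) / 2, 1:] * A (s + n)) =
        smult (anticomm_factor s n) (B' (s + n) + [:of_int (s + n) / 2, 1:] * A' (s + n))"
    using anticomm_G0v[of s n] other.anticomm_G0v[of s n] assms(3-6) by simp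
  then have "B (s + n) + [:of_int (s + n) / 2, 1:] * A (s + n) =
             B' (s + n) + [:of_int (s + n) / 2, 1:] * A' (s + n)"
    using anticomm_factor_nonzero by (rule smult_cancel[rotated])
  then have "smult (of_int (s + n) / 2) (A (s + n)) + ([:0, 1:] * A (s + n) + B (s + n)) =
             smult (of_int (s + n) / 2) (A' (s + n)) + ([:0, 1:] * A' (s + n) + B' (s + n))"
    by (simp add: algebra_simps)
  then have "smult (of_int (s + n) / 2) (A (s + n)) = smult (of_int (s + n) / 2) (A' (s + n))"
    unfolding v by simp
  then have "A (s + n) = A' (s + n)"
    by (rule smult_cancel[rotated]) (use \<open>s + n \<noteq> 0\<close> in \<open>simp del: of_int_add\<close>)
  with v show ?thesis by simp
qed

lemma eq_model:
  obtains u \<alpha> where "u \<noteq> 0" "\<And>b. A b = model_A u b" "\<And>b. B b = model_B u \<alpha> b"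
proof -
  obtain u \<alpha> where "u \<noteq> 0" and pm1: "A 1 = model_A u 1" "B 1 = model_B u \<alpha> 1"
    "A (-1) = model_A u (-1)" "B (-1) = model_B u \<alpha> (-1)"
    using eq_model_at_pm1 .
  note model = anticomm_system_model[OF \<open>u \<noteq> 0\<close>, of \<alpha>]
  have "A b = model_A u b \<and> B b = model_B u \<alpha> b" for b
  proof (induction b rule: int_induct[where k = 0])
    case base
    show ?case using A_0 B_0 anticomm_system.A_0[OF model] anticomm_system.B_0[OF model] by simp
  next
    case (step1 i)
    then show ?case using agree_at_add[OF model, of i 1] pm1 by simp
  next
    case (step2 i)
    then show ?case using agree_at_add[OF model, of i "-1"] pm1 by simp
  qed
  with \<open>u \<noteq> 0\<close> that show ?thesis by blast
qed

end


section \<open>Modules free of rank one over \<open>U(h)\<close>\<close>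

lemma csqrt_square_sign:
  fixes u :: complex
  assumes "u \<noteq> 0"
  shows "u / csqrt (u\<^sup>2) \<in> {1, -1}" "u / csqrt (u\<^sup>2) * csqrt (u\<^sup>2) = u"
proof -
  have "(csqrt (u\<^sup>2) - u) * (csqrt (u\<^sup>2) + u) = 0"
    by (simp add: algebra_simps power2_eq_square[symmetric])
  then have "csqrt (u\<^sup>2) = u \<or> csqrt (u\<^sup>2) = - u"
    by (auto simp: add_eq_0_iff2)
  with assms show "u / csqrt (u\<^sup>2) \<in> {1, -1}" "u / csqrt (u\<^sup>2) * csqrt (u\<^sup>2) = u"
    by auto
qed

lemma vector_space_M: "vector_space M_scale"
  by unfold_locales (auto simp: M_scale_def smult_add_right smult_add_left)

locale T_module = complex_vector_space scale
  for scale :: "complex \<Rightarrow> 'v::ab_group_add \<Rightarrow> 'v" +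
  fixes V0 V1 :: "'v set" and L I G :: "int \<Rightarrow> 'v \<Rightarrow> 'v"
  assumes T_module: "is_T_module scale V0 V1 L I G"
begin

lemma T_module_rules:
  "subspace V0" "subspace V1" "V0 \<inter> V1 = {0}"
  "\<forall>x. \<exists>x0\<in>V0. \<exists>x1\<in>V1. x = x0 + x1"
  "\<forall>m. Vector_Spaces.linear scale scale (L m)" "\<forall>b. Vector_Spaces.linear scale scale (G b)"
  "\<forall>m. L m ` V0 \<subseteq> V0 \<and> L m ` V1 \<subseteq> V1" "\<forall>b. G b ` V0 \<subseteq> V1 \<and> G b ` V1 \<subseteq> V0"
  "\<forall>m b u. L m (G b u) - G b (L m u) =
      scale (of_int m / 2 - of_int b / 2) (G (2 * m + b) u)"
  "\<forall>a b u. G a (G b u) + G b (G a u) =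
      (if even (a + b)
       then scale ((-1) ^ nat \<bar>a\<bar> * 2) (L ((a + b) div 2) u)
       else scale ((-1) ^ nat \<bar>a + 1\<bar> * (of_int a / 2 - of_int b / 2)) (I (a + b) u))"
  using T_module unfolding is_T_module_def by - (elim conjE, assumption)+

lemmas subspace_V0 = T_module_rules(1)
  and subspace_V1 = T_module_rules(2)
  and V0_inter_V1 = T_module_rules(3)
  and graded_decomposition = T_module_rules(4)[rule_format]
  and linear_L = T_module_rules(5)[rule_format]
  and linear_G = T_module_rules(6)[rule_format]
  and L_G_commutator = T_module_rules(9)[rule_format]
  and G_G_anticommutator = T_module_rules(10)[rule_format]

lemma L_V0: "u \<in> V0 \<Longrightarrow> L m u \<in> V0" and L_V1: "u \<in> V1 \<Longrightarrow> L m u \<in> V1"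
  using T_module_rules(7) by blast+

lemma G_V0: "u \<in> V0 \<Longrightarrow> G b u \<in> V1" and G_V1: "u \<in> V1 \<Longrightarrow> G b u \<in> V0"
  using T_module_rules(8) by blast+

lemma graded_decomposition_unique:
  assumes "x0 + x1 = y0 + y1" "x0 \<in> V0" "y0 \<in> V0" "x1 \<in> V1" "y1 \<in> V1"
  shows "x0 = y0 \<and> x1 = y1"
proof -
  have "x0 - y0 = y1 - x1" using assms(1) by (simp add: algebra_simps)
  moreover have "x0 - y0 \<in> V0" "y1 - x1 \<in> V1"
    using assms subspace_V0 subspace_V1 by (simp_all add: subspace_diff)
  ultimately have "y1 - x1 \<in> V0 \<inter> V1" by simp
  then have "y1 - x1 = 0" using V0_inter_V1 by blast
  with assms(1) show ?thesis by simp
qed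

lemma G0_G0: "G 0 (G 0 u) = L 0 u"
proof -
  have "scale 2 (G 0 (G 0 u)) = scale 2 (L 0 u)"
    using G_G_anticommutator[of 0 0 u] by (simp add: scale_2)
  then show ?thesis by simp
qed

lemma G_L0: "G b (L 0 u) = L 0 (G b u) + scale (of_int b / 2) (G b u)"
proof -
  have "L 0 (G b u) - G b (L 0 u) = - scale (of_int b / 2) (G b u)"
    using L_G_commutator[of 0 b u] by simp
  then show ?thesis by (simp add: algebra_simps)
qed

lemma L_eq_anticommutator: "L m u = scale (1 / 2) (G 0 (G (2 * m) u) + G (2 * m) (G 0 u))"
  using G_G_anticommutator[of 0 "2 * m" u] by simp

lemma I_eq_anticommutator:
  assumes "odd a"
  shows "I a u = scale (2 / of_int a) (G 0 (G a u) + G a (G 0 u))"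
proof -
  have "(of_int a :: complex) \<noteq> 0" using assms by (metis even_zero of_int_eq_0_iff)
  with assms show ?thesis using G_G_anticommutator[of 0 a u] by simp
qed

lemma G_anticommutator_factor:
  "G a (G b u) + G b (G a u) = scale (anticomm_factor a b) (G 0 (G (a + b) u) + G (a + b) (G 0 u))"
proof (cases "even (a + b)")
  case True
  then have "2 * ((a + b) div 2) = a + b" by simp
  with True show ?thesis
    using G_G_anticommutator[of a b u] L_eq_anticommutator[of "(a + b) div 2" u]
    by (simp add: anticomm_factor_def)
next
  case False
  have "of_int a / 2 - of_int b / 2 = (of_int (a - b) :: complex) / 2"
    by (simp add: diff_divide_distrib)
  then have "(of_int a / 2 - of_int b / 2) * (2 / of_int (a + b)) = of_int (a - b) / (of_int (a + b) :: complex)"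
    by simp
  with False have "(-1) ^ nat \<bar>a + 1\<bar> * (of_int a / 2 - of_int b / 2) * (2 / of_int (a + b)) =
      anticomm_factor a b"
    by (simp add: anticomm_factor_def mult.assoc)
  with False show ?thesis
    using G_G_anticommutator[of a b u] I_eq_anticommutator[OF False, of u]
    by (simp add: mult.assoc)
qed


lemma L0_op_poly: "L 0 (op_poly scale f (L 0) u) = op_poly scale ([:0, 1:] * f) (L 0) u"
  by (simp add: op_poly_pCons[OF linear_L])

lemma op_poly_L0_commute: "op_poly scale f (L 0) (L 0 u) = L 0 (op_poly scale f (L 0) u)"
  using op_poly_commute[OF linear_L[of 0] linear_L[of 0], of 0 f u] by simp

lemma G_op_poly: "G b (op_poly scale f (L 0) u) = op_poly scale (shift (of_int b / 2) f) (L 0) (G b u)"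
  unfolding shift_def by (rule op_poly_commute[OF linear_L linear_G]) (rule G_L0)

definition parity_flip :: "'v \<Rightarrow> 'v" where
  "parity_flip x = (THE y. \<exists>x0\<in>V0. \<exists>x1\<in>V1. x = x0 + x1 \<and> y = x0 - x1)"

lemma parity_flip_eq: "x0 \<in> V0 \<Longrightarrow> x1 \<in> V1 \<Longrightarrow> parity_flip (x0 + x1) = x0 - x1"
  unfolding parity_flip_def
  by (rule the_equality) (use graded_decomposition_unique in blast)+

lemma parity_flip_flip: "parity_flip (parity_flip x) = x"
proof -
  obtain x0 x1 where "x0 \<in> V0" "x1 \<in> V1" "x = x0 + x1"
    using graded_decomposition by blast
  moreover have "- x1 \<in> V1" using \<open>x1 \<in> V1\<close> subspace_V1 by (rule subspace_neg[rotated])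
  ultimately show ?thesis
    by (metis parity_flip_eq diff_conv_add_uminus minus_minus)
qed

lemma parity_flip_op_poly:
  "parity_flip (op_poly scale h (L 0) x + op_poly scale k (L 0) (G 0 x)) =
     op_poly scale h (L 0) (parity_flip x) - op_poly scale k (L 0) (G 0 (parity_flip x))"
proof -
  let ?h = "op_poly scale h (L 0)" and ?k = "op_poly scale k (L 0)"
  have h: "Vector_Spaces.linear scale scale ?h" and k: "Vector_Spaces.linear scale scale ?k"
    by (simp_all add: linear_op_poly linear_L)
  obtain x0 x1 where x: "x0 \<in> V0" "x1 \<in> V1" "x = x0 + x1"
    using graded_decomposition by blast
  have "?h x0 + ?k (G 0 x1) \<in> V0"
    using x subspace_V0 by (intro subspace_add op_poly_in_subspace[OF linear_L] L_V0 G_V1)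
  moreover have "?h x1 + ?k (G 0 x0) \<in> V1"
    using x subspace_V1 by (intro subspace_add op_poly_in_subspace[OF linear_L] L_V1 G_V0)
  moreover have "?h x + ?k (G 0 x) = (?h x0 + ?k (G 0 x1)) + (?h x1 + ?k (G 0 x0))"
    by (simp add: x endo.linear_add[OF h] endo.linear_add[OF k] endo.linear_add[OF linear_G] ac_simps)
  ultimately have "parity_flip (?h x + ?k (G 0 x)) = (?h x0 + ?k (G 0 x1)) - (?h x1 + ?k (G 0 x0))"
    by (simp add: parity_flip_eq)
  also have "\<dots> = ?h (x0 - x1) - ?k (G 0 (x0 - x1))"
    by (simp add: endo.linear_diff[OF h] endo.linear_diff[OF k] endo.linear_diff[OF linear_G])
  also have "x0 - x1 = parity_flip x"
    using x by (simp add: parity_flip_eq)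
  finally show ?thesis .
qed

end

locale free_T_module = T_module +
  fixes v
  assumes free: "bij (\<lambda>(f, g). op_poly scale f (L 0) v + op_poly scale g (L 0) (G 0 v))"
begin

definition vec_of where
  "vec_of f g = op_poly scale f (L 0) v + op_poly scale g (L 0) (G 0 v)"

lemma bij_vec_of: "bij (\<lambda>(f, g). vec_of f g)"
  using free by (simp add: vec_of_def)

lemma vec_of_eq_iff [simp]: "vec_of f g = vec_of f' g' \<longleftrightarrow> f = f' \<and> g = g'"
  using bij_is_inj[OF bij_vec_of] unfolding inj_def by fastforce

lemma vec_of_cases:
  obtains f g where "x = vec_of f g"
  using bij_is_surj[OF bij_vec_of] by (metis (no_types, lifting) case_prod_beta surjD)

lemma vec_of_add: "vec_of f g + vec_of f' g' = vec_of (f + f') (g + g')"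
  by (simp add: vec_of_def op_poly_add ac_simps)

lemma vec_of_diff: "vec_of f g - vec_of f' g' = vec_of (f - f') (g - g')"
  by (simp add: vec_of_def op_poly_diff algebra_simps)

lemma scale_vec_of: "scale c (vec_of f g) = vec_of (smult c f) (smult c g)"
  by (simp add: vec_of_def op_poly_smult scale_right_distrib)

lemma vec_of_1_0: "vec_of 1 0 = v"
  by (simp add: vec_of_def op_poly_1[OF linear_L])

lemma op_poly_vec_of: "op_poly scale p (L 0) (vec_of f g) = vec_of (p * f) (p * g)"
  by (simp add: vec_of_def endo.linear_add[OF linear_op_poly[OF linear_L]] op_poly_mult[OF linear_L])

lemma G0_vec_of: "G 0 (vec_of f g) = vec_of ([:0, 1:] * g) f"
proof -
  have "G 0 (vec_of f g) = op_poly scale f (L 0) (G 0 v) + op_poly scale g (L 0) (L 0 v)"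
    using G_op_poly[of 0] by (simp add: vec_of_def endo.linear_add[OF linear_G] G0_G0)
  also have "op_poly scale g (L 0) (L 0 v) = op_poly scale ([:0, 1:] * g) (L 0) v"
    by (simp only: op_poly_L0_commute L0_op_poly)
  finally show ?thesis by (simp add: vec_of_def add.commute)
qed

lemma G_vec_of:
  assumes "G b v = vec_of 0 p" "G b (G 0 v) = vec_of q 0"
  shows "G b (vec_of f g) = vec_of (q * shift (of_int b / 2) g) (p * shift (of_int b / 2) f)"
proof -
  have "G b (vec_of f g) = op_poly scale (shift (of_int b / 2) f) (L 0) (G b v) +
                           op_poly scale (shift (of_int b / 2) g) (L 0) (G b (G 0 v))"
    by (simp add: vec_of_def endo.linear_add[OF linear_G] G_op_poly)
  then show ?thesis
    by (simp add: assms op_poly_vec_of vec_of_add mult.commute)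
qed

definition coords where
  "coords = inv (\<lambda>(f, g). vec_of f g)"

lemma coords_vec_of [simp]: "coords (vec_of f g) = (f, g)"
  using inv_f_f[OF bij_is_inj[OF bij_vec_of], of "(f, g)"] by (simp add: coords_def)

lemma bij_coords: "bij coords"
  unfolding coords_def by (rule bij_imp_bij_inv[OF bij_vec_of])

lemma linear_coords: "Vector_Spaces.linear scale M_scale coords"
  unfolding Vector_Spaces.linear_iff
proof (intro conjI allI)
  fix x y
  obtain f g f' g' where "x = vec_of f g" "y = vec_of f' g'" using vec_of_cases by metis
  then show "coords (x + y) = coords x + coords y" by (simp add: vec_of_add)
next
  fix c x
  obtain f g where "x = vec_of f g" using vec_of_cases by metis
  then show "coords (scale c x) = M_scale c (coords x)" by (simp add: scale_vec_of M_scale_def)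
qed (fact vector_space_axioms, fact vector_space_M)

lemma generator_homogeneous: "v \<in> V0 \<or> v \<in> V1"
proof -
  obtain h k where hk: "parity_flip v = vec_of h k"
    using vec_of_cases by blast
  have "vec_of 1 0 = parity_flip (parity_flip v)"
    by (simp add: parity_flip_flip vec_of_1_0)
  also have "\<dots> = op_poly scale h (L 0) (vec_of h k) - op_poly scale k (L 0) (G 0 (vec_of h k))"
    using parity_flip_op_poly[where h = h and k = k and x = v] by (simp add: hk vec_of_def)
  also have "\<dots> = vec_of (h * h - [:0, 1:] * (k * k)) 0"
    by (simp add: op_poly_vec_of G0_vec_of vec_of_diff algebra_simps)
  finally have "k = 0 \<and> (h = 1 \<or> h = -1)"
    by (intro pell_poly_trivial) simp
  then have flip: "parity_flip v = v \<or> parity_flip v = - v"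
    using hk vec_of_1_0 scale_vec_of[of "-1" 1 0] by (auto simp: one_pCons)
  obtain v0 v1 where v: "v0 \<in> V0" "v1 \<in> V1" "v = v0 + v1"
    using graded_decomposition by blast
  with flip have "v1 + v1 = 0 \<or> v0 + v0 = 0"
    by (auto simp: parity_flip_eq algebra_simps eq_neg_iff_add_eq_0)
  then have "v1 = 0 \<or> v0 = 0"
    by (metis scale_2 scale_eq_0_iff zero_neq_numeral)
  with v show ?thesis by auto
qed

end

locale even_free_T_module = free_T_module +
  assumes v_even: "v \<in> V0"
begin

lemma vec_of_in_V0: "vec_of f 0 \<in> V0"
  using subspace_V0 L_V0 v_even by (simp add: vec_of_def op_poly_in_subspace[OF linear_L])

lemma vec_of_in_V1: "vec_of 0 g \<in> V1"
  using subspace_V1 L_V1 G_V0[OF v_even] by (simp add: vec_of_def op_poly_in_subspace[OF linear_L])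

lemma V0_eq: "V0 = range (\<lambda>f. vec_of f 0)"
proof safe
  fix u assume "u \<in> V0"
  obtain f g where u: "u = vec_of f g" using vec_of_cases .
  then have "u + 0 = vec_of f 0 + vec_of 0 g" by (simp add: vec_of_add)
  then have "vec_of 0 g = vec_of 0 0"
    using graded_decomposition_unique \<open>u \<in> V0\<close> vec_of_in_V0 vec_of_in_V1 subspace_0[OF subspace_V1]
    by (metis vec_of_def op_poly_0 add_0)
  with u show "u \<in> range (\<lambda>f. vec_of f 0)" by simp
qed (rule vec_of_in_V0)

lemma V1_eq: "V1 = range (vec_of 0)"
proof safe
  fix u assume "u \<in> V1"
  obtain f g where u: "u = vec_of f g" using vec_of_cases .
  then have "0 + u = vec_of f 0 + vec_of 0 g" by (simp add: vec_of_add)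
  then have "vec_of f 0 = vec_of 0 0"
    using graded_decomposition_unique \<open>u \<in> V1\<close> vec_of_in_V0 vec_of_in_V1 subspace_0[OF subspace_V0]
    by (metis vec_of_def op_poly_0 add_0)
  with u show "u \<in> range (vec_of 0)" by simp
qed (rule vec_of_in_V1)

definition A_G :: "int \<Rightarrow> complex poly" where
  "A_G b = (SOME p. G b v = vec_of 0 p)"

definition B_G :: "int \<Rightarrow> complex poly" where
  "B_G b = (SOME q. G b (G 0 v) = vec_of q 0)"

lemma G_v: "G b v = vec_of 0 (A_G b)"
proof -
  have "\<exists>p. G b v = vec_of 0 p" using G_V0[OF v_even] V1_eq by blast
  then show ?thesis unfolding A_G_def by (rule someI_ex)
qed

lemma G_G0_v: "G b (G 0 v) = vec_of (B_G b) 0"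
proof -
  have "\<exists>q. G b (G 0 v) = vec_of q 0" using G_V1[OF G_V0[OF v_even]] V0_eq by blast
  then show ?thesis unfolding B_G_def by (rule someI_ex)
qed

lemma G_vec_of_coeffs:
  "G b (vec_of f g) = vec_of (B_G b * shift (of_int b / 2) g) (A_G b * shift (of_int b / 2) f)"
  by (rule G_vec_of[OF G_v G_G0_v])

lemma G0_v: "G 0 v = vec_of 0 1"
  using G0_vec_of[of 1 0] by (simp add: vec_of_1_0)

lemma anticomm_system_G: "anticomm_system A_G B_G"
proof -
  have A0: "A_G 0 = 1"
    using G_v[of 0] G0_v by simp
  have B0: "B_G 0 = [:0, 1:]"
    using G_G0_v[of 0] G0_v G0_vec_of[of 0 1] by simp
  show ?thesis
  proof
    fix a b
    have "vec_of (B_G a * shift (of_int a / 2) (A_G b) + B_G b * shift (of_int b / 2) (A_G a)) 0 =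
          vec_of (smult (anticomm_factor a b) ([:0, 1:] * A_G (a + b) + B_G (a + b))) 0"
      using G_anticommutator_factor[of a b "vec_of 1 0"]
      by (simp add: G_vec_of_coeffs A0 B0 vec_of_add scale_vec_of)
    then show "B_G a * shift (of_int a / 2) (A_G b) + B_G b * shift (of_int b / 2) (A_G a) =
               smult (anticomm_factor a b) ([:0, 1:] * A_G (a + b) + B_G (a + b))"
      by simp
    have "vec_of 0 (A_G a * shift (of_int a / 2) (B_G b) + A_G b * shift (of_int b / 2) (B_G a)) =
          vec_of 0 (smult (anticomm_factor a b) (B_G (a + b) + [:of_int (a + b) / 2, 1:] * A_G (a + b)))"
      using G_anticommutator_factor[of a b "vec_of 0 1"]
      by (simp add: G_vec_of_coeffs A0 B0 vec_of_add scale_vec_of mult.commute)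
    then show "A_G a * shift (of_int a / 2) (B_G b) + A_G b * shift (of_int b / 2) (B_G a) =
               smult (anticomm_factor a b) (B_G (a + b) + [:of_int (a + b) / 2, 1:] * A_G (a + b))"
      by simp
  qed (fact A0, fact B0)
qed


lemma coords_V0: "coords ` V0 = M_even"
  by (auto simp: V0_eq M_even_def image_image)

lemma coords_V1: "coords ` V1 = M_odd"
  by (auto simp: V1_eq M_odd_def image_image)

context
  fixes u \<alpha> :: complex
  assumes A_G_model: "\<And>b. A_G b = model_A u b"
    and B_G_model: "\<And>b. B_G b = model_B u \<alpha> b"
begin

lemma G_vec_of_model: "G b (vec_of f g) =
    vec_of (smult ((-u) powi b) ([:of_int b * \<alpha>, 1:] * shift (of_int b / 2) g))
           (smult (u powi b) (shift (of_int b / 2) f))"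
  by (simp add: G_vec_of_coeffs A_G_model B_G_model model_A_def model_B_def smult_add_right)

lemma L_vec_of_model: "L m (vec_of f g) =
    vec_of (smult (u powi (2 * m)) ([:of_int m * \<alpha>, 1:] * shift (of_int m) f))
           (smult (u powi (2 * m)) ([:of_int m * (\<alpha> + 1 / 2), 1:] * shift (of_int m) g))"
proof -
  have "L m (vec_of f g) = scale (1 / 2) (G 0 (G (2 * m) (vec_of f g)) + G (2 * m) (G 0 (vec_of f g)))"
    by (rule L_eq_anticommutator)
  also have "\<dots> = vec_of
      (smult (1 / 2) ([:0, 1:] * smult (u powi (2 * m)) (shift (of_int m) f) +
        smult ((-u) powi (2 * m)) ([:of_int (2 * m) * \<alpha>, 1:] * shift (of_int m) f)))
      (smult (1 / 2) (smult ((-u) powi (2 * m)) ([:of_int (2 * m) * \<alpha>, 1:] * shift (of_int m) g) +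
        smult (u powi (2 * m)) (shift (of_int m) ([:0, 1:] * g))))"
    by (simp add: G_vec_of_model G0_vec_of vec_of_add scale_vec_of)
  also have "\<dots> = vec_of
      (smult (u powi (2 * m)) ([:of_int m * \<alpha>, 1:] * shift (of_int m) f))
      (smult (u powi (2 * m)) ([:of_int m * (\<alpha> + 1 / 2), 1:] * shift (of_int m) g))"
    by (intro arg_cong2[where f = vec_of] poly_eq_poly_eq_iff[THEN iffD1] ext)
       (simp_all add: power_int_minus_left algebra_simps)
  finally show ?thesis .
qed

lemma I_vec_of_model:
  assumes "odd a"
  shows "I a (vec_of f g) =
    vec_of (smult (- 2 * u powi a * \<alpha>) (shift (of_int a / 2) f))
           (smult (u powi a * (1 - 2 * \<alpha>)) (shift (of_int a / 2) g))"
proof -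
  have "(of_int a :: complex) \<noteq> 0" using assms by (metis even_zero of_int_eq_0_iff)
  have "I a (vec_of f g) = scale (2 / of_int a) (G 0 (G a (vec_of f g)) + G a (G 0 (vec_of f g)))"
    by (rule I_eq_anticommutator[OF assms])
  also have "\<dots> = vec_of
      (smult (2 / of_int a) ([:0, 1:] * smult (u powi a) (shift (of_int a / 2) f) -
        smult (u powi a) ([:of_int a * \<alpha>, 1:] * shift (of_int a / 2) f)))
      (smult (2 / of_int a) (- smult (u powi a) ([:of_int a * \<alpha>, 1:] * shift (of_int a / 2) g) +
        smult (u powi a) (shift (of_int a / 2) ([:0, 1:] * g))))"
    using assms by (simp add: G_vec_of_model G0_vec_of vec_of_add scale_vec_of power_int_minus_left)
  also have "\<dots> = vec_of
      (smult (- 2 * u powi a * \<alpha>) (shift (of_int a / 2) f))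
      (smult (u powi a * (1 - 2 * \<alpha>)) (shift (of_int a / 2) g))"
    using \<open>(of_int a :: complex) \<noteq> 0\<close>
    by (intro arg_cong2[where f = vec_of] poly_eq_poly_eq_iff[THEN iffD1] ext)
       (simp_all add: field_simps)
  finally show ?thesis .
qed

lemma iso_to_M_model:
  assumes "t * csqrt lam = u" and "t \<in> {1, -1}"
  shows "iso_to_M scale V0 V1 L I G t lam \<alpha>"
proof -
  have pw: "t powi b * csqrt lam powi b = u powi b" for b
    using assms(1) by (simp add: power_int_mult_distrib[symmetric])
  have pw': "(- t) powi b * csqrt lam powi b = (- u) powi b" for b
    using assms(1) by (simp add: power_int_mult_distrib[symmetric])
  have "csqrt lam powi (2 * m) = u powi (2 * m)" for m
    using pw[of "2 * m"] assms(2) by (auto simp: power_int_minus_left)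
  then have L: "coords (L m w) = M_L lam \<alpha> m (coords w)" for m w
    by (cases w rule: vec_of_cases) (simp add: L_vec_of_model M_L_def)
  have I: "coords (I a w) = M_I t lam \<alpha> a (coords w)" if "odd a" for a w
    using that by (cases w rule: vec_of_cases)
      (simp add: I_vec_of_model M_I_def pw[symmetric] mult_ac)
  have G: "coords (G b w) = M_G t lam \<alpha> b (coords w)" for b w
    by (cases w rule: vec_of_cases) (simp add: G_vec_of_model M_G_def pw pw')
  show ?thesis
    unfolding iso_to_M_def
    using linear_coords bij_coords coords_V0 coords_V1 L I G by blast
qed

end

lemma iso_to_M_exists: "\<exists>lam \<alpha> t. lam \<noteq> 0 \<and> t \<in> {1, -1} \<and> iso_to_M scale V0 V1 L I G t lam \<alpha>"
proof -
  obtain u \<alpha> where "u \<noteq> 0" "\<And>b. A_G b = model_A u b" "\<And>b. B_G b = model_B u \<alpha> b"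
    using anticomm_system.eq_model[OF anticomm_system_G] by metis
  then have "iso_to_M scale V0 V1 L I G (u / csqrt (u\<^sup>2)) (u\<^sup>2) \<alpha>"
    using csqrt_square_sign[OF \<open>u \<noteq> 0\<close>] by (intro iso_to_M_model)
  moreover have "u\<^sup>2 \<noteq> 0" using \<open>u \<noteq> 0\<close> by simp
  ultimately show ?thesis
    using csqrt_square_sign(1)[OF \<open>u \<noteq> 0\<close>] by blast
qed

end


lemma is_T_module_swap:
  assumes "is_T_module scale V0 V1 L I G"
  shows "is_T_module scale V1 V0 L I G"
proof -
  have swapped_decomposition: "\<forall>x. \<exists>x1\<in>V1. \<exists>x0\<in>V0. x = x1 + x0"
    using assms unfolding is_T_module_def by (elim conjE) (metis add.commute)
  show ?thesis
    using assms unfolding is_T_module_def Int_commute[of V0 V1]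
    by (simp add: swapped_decomposition)
qed

lemma T_module_if_is_T_module:
  assumes "is_T_module scale V0 V1 L I G"
  shows "T_module scale V0 V1 L I G"
proof -
  have "vector_space scale" using assms unfolding is_T_module_def by blast
  with assms show ?thesis by (simp add: T_module_def T_module_axioms_def complex_vector_space_def)
qed

lemma iso_to_M_if_even_generator:
  assumes "is_T_module scale V0 V1 L I G"
    and "bij (\<lambda>(f, g). op_poly scale f (L 0) v + op_poly scale g (L 0) (G 0 v))"
    and "v \<in> V0"
  shows "\<exists>lam \<alpha> t. lam \<noteq> 0 \<and> t \<in> {1, -1} \<and> iso_to_M scale V0 V1 L I G t lam \<alpha>"
proof -
  interpret even_free_T_module scale V0 V1 L I G v
    by (intro even_free_T_module.intro free_T_module.intro T_module_if_is_T_module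
        even_free_T_module_axioms.intro free_T_module_axioms.intro assms)
  show ?thesis by (rule iso_to_M_exists)
qed

theorem theorem3p3:
  fixes scale :: "complex \<Rightarrow> 'v::ab_group_add \<Rightarrow> 'v"
    and V0 V1 :: "'v set"
    and L I G :: "int \<Rightarrow> 'v \<Rightarrow> 'v"
  assumes "is_T_module scale V0 V1 L I G"
    and "Uh_free_rank1 scale L G"
  shows "\<exists>lam \<alpha> t. lam \<noteq> 0 \<and> t \<in> {1, -1} \<and>
           (iso_to_M scale V0 V1 L I G t lam \<alpha> \<or> iso_to_M scale V1 V0 L I G t lam \<alpha>)"
proof -
  obtain v where free: "bij (\<lambda>(f, g). op_poly scale f (L 0) v + op_poly scale g (L 0) (G 0 v))"
    using assms(2) unfolding Uh_free_rank1_def by blast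
  interpret free_T_module scale V0 V1 L I G v
    by (intro free_T_module.intro T_module_if_is_T_module free_T_module_axioms.intro assms(1) free)
  consider "v \<in> V0" | "v \<in> V1"
    using generator_homogeneous by blast
  then show ?thesis
  proof cases
    case 1
    then show ?thesis using iso_to_M_if_even_generator[OF assms(1) free] by blast
  next
    case 2
    then show ?thesis using iso_to_M_if_even_generator[OF is_T_module_swap[OF assms(1)] free] by blast
  qed
qed

end
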